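(* For every integer $N\ge1$, $$\phi_N(y,z)=\{(q-1)z\}^{-N(N-1)/2}q^{-(N-2)(N-1)N/6}\det\Big(p_{2(N-i)+1}\big(y,q^{N-j}z\big)\Big)_{i,j=1}^{N},$$ i.e. the determinant has first row $p_{2N-1}(y,q^{N-1}z),p_{2N-1}(y,q^{N-2}z),\dots,p_{2N-1}(y,z)$ and last row $p_1(y,q^{N-1}z),\dots,p_1(y,z)$.
   Context: $q$ is a fixed nonzero complex constant that is not a root of unity; $y,z$ are variables. For $k\in\mathbb{Z}$ the polynomials $p_k(y,z)$ are defined by the generating function $\sum_{n\ge 0}p_n(y,z)t^n=\frac{(-(1-q)t;q)_\infty}{((1-q)yt;q)_\infty((1-q)zt;q)_\infty}$, with $(a;q)_\infty=\prod_{i\ge0}(1-aq^i)$, and $p_k=0$ for $k<0$; equivalently $p_n(y,z)=(1-q)^n\sum_{a+b+c=n}\frac{y^a z^b q^{c(c-1)/2}}{(q;q)_a(q;q)_b(q;q)_c}$ with $(q;q)_m=\prod_{j=1}^m(1-q^j)$. For $N>0$, $\phi_N(y,z)=\det\big(p_{N-2i+j+1}(y,z)\big)_{i,j=1}^N$. *)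

theory Defs
  imports Complex_Main "Jordan_Normal_Form.Determinant"
begin

definition qpoch :: "complex \<Rightarrow> nat \<Rightarrow> complex" where
  "qpoch q m = (\<Prod>j=1..m. 1 - q ^ j)"

definition pp :: "complex \<Rightarrow> int \<Rightarrow> complex \<Rightarrow> complex \<Rightarrow> complex" where
  "pp q k y z = (if k < 0 then 0 else
     (let n = nat k in
      (1 - q) ^ n *
      (\<Sum>(a, b, c) \<in> {(a, b, c). a + b + c = n}.
          y ^ a * z ^ b * q ^ (c * (c - 1) div 2) / (qpoch q a * qpoch q b * qpoch q c))))"

text \<open>phi_N(y,z) = det (p_{N-2i+j+1}(y,z))_{i,j=1..N}; here with 0-based indices
  i' = i-1, j' = j-1 the entry is p_{N-2i'+j'}.\<close>
definition phi :: "complex \<Rightarrow> nat \<Rightarrow> complex \<Rightarrow> complex \<Rightarrow> complex" where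
  "phi q N y z = det (mat N N (\<lambda>(i, j). pp q (int N - 2 * int i + int j) y z))"

end

theory Submission
  imports Defs
begin

text \<open>Replacing z by q z multiplies the generating function of the p_k(y, z) by
  1 - (1 - q) z t, so that p_k(y, q w) - p_k(y, w) = (q - 1) w p_{k-1}(y, w). Hence subtracting
  from a column of the right-hand matrix its right neighbour lowers every index in that column by
  one, divides its argument by q and extracts the factor (q - 1) z times a power of q. Doing this in
  rounds m = 0, ..., N - 2, round m acting on the columns j < N - 1 - m (counted from 0), lowers the
  indices in column j by N - 1 - j in total and so produces the matrix of phi_N; the extracted
  factors multiply to ((q - 1) z)^(N(N-1)/2) q^((N-2)(N-1)N/6).\<close>

lemma qpoch_Suc: "qpoch q (Suc m) = qpoch q m * (1 - q ^ Suc m)"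
  unfolding qpoch_def by (simp add: prod.nat_ivl_Suc' mult.commute)

text \<open>(1 - q)^m hcoeff q m w is the coefficient of t^m in (-(1-q)t; q)_inf / ((1-q)wt; q)_inf.\<close>
definition hcoeff :: "complex \<Rightarrow> nat \<Rightarrow> complex \<Rightarrow> complex" where
  "hcoeff q m w =
     (\<Sum>b\<le>m. w ^ b * q ^ ((m - b) * (m - b - 1) div 2) / (qpoch q b * qpoch q (m - b)))"

definition pp_scaled :: "complex \<Rightarrow> nat \<Rightarrow> complex \<Rightarrow> complex \<Rightarrow> complex" where
  "pp_scaled q n y w = (\<Sum>a\<le>n. y ^ a / qpoch q a * hcoeff q (n - a) w)"

lemma hcoeff_0 [simp]: "hcoeff q 0 w = 1"
  by (simp add: hcoeff_def qpoch_def)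

lemma hcoeff_q_difference:
  assumes "\<forall>n::nat. n > 0 \<longrightarrow> q ^ n \<noteq> 1"
  shows "hcoeff q (Suc m) w - hcoeff q (Suc m) (q * w) = w * hcoeff q m w"
proof -
  let ?e = "\<lambda>m b. q ^ ((m - b) * (m - b - 1) div 2)"
  have "hcoeff q (Suc m) w - hcoeff q (Suc m) (q * w) =
      (\<Sum>b\<le>Suc m. w ^ b * (1 - q ^ b) * ?e (Suc m) b / (qpoch q b * qpoch q (Suc m - b)))"
    unfolding hcoeff_def sum_subtractf[symmetric]
    by (rule sum.cong) (auto simp: power_mult_distrib diff_divide_distrib algebra_simps)
  also have "\<dots> = (\<Sum>b\<le>m. w ^ Suc b * (1 - q ^ Suc b) * ?e m b / (qpoch q (Suc b) * qpoch q (m - b)))"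
    by (subst sum.atMost_Suc_shift) simp
  also have "\<dots> = (\<Sum>b\<le>m. w * (w ^ b * ?e m b / (qpoch q b * qpoch q (m - b))))"
  proof (rule sum.cong)
    fix b
    have "1 - q ^ Suc b \<noteq> 0"
      using assms by (metis right_minus_eq zero_less_Suc)
    then show "w ^ Suc b * (1 - q ^ Suc b) * ?e m b / (qpoch q (Suc b) * qpoch q (m - b)) =
        w * (w ^ b * ?e m b / (qpoch q b * qpoch q (m - b)))"
      by (simp add: qpoch_Suc)
  qed simp
  finally show ?thesis
    by (simp add: hcoeff_def sum_distrib_left)
qed

lemma pp_scaled_0 [simp]: "pp_scaled q 0 y w = 1"
  by (simp add: pp_scaled_def qpoch_def)

lemma pp_scaled_q_difference:
  assumes "\<forall>n::nat. n > 0 \<longrightarrow> q ^ n \<noteq> 1"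
  shows "pp_scaled q (Suc n) y w - pp_scaled q (Suc n) y (q * w) = w * pp_scaled q n y w"
proof -
  have "pp_scaled q (Suc n) y w - pp_scaled q (Suc n) y (q * w) =
      (\<Sum>a\<le>Suc n. y ^ a / qpoch q a * (hcoeff q (Suc n - a) w - hcoeff q (Suc n - a) (q * w)))"
    unfolding pp_scaled_def sum_subtractf[symmetric] by (simp add: algebra_simps)
  also have "\<dots> = (\<Sum>a\<le>n. y ^ a / qpoch q a * (w * hcoeff q (n - a) w))"
    by (simp add: Suc_diff_le hcoeff_q_difference[OF assms])
  finally show ?thesis
    by (simp add: pp_scaled_def sum_distrib_left algebra_simps)
qed

lemma pp_of_nat: "pp q (int n) y z = (1 - q) ^ n * pp_scaled q n y z"
proof -
  let ?f = "\<lambda>(a, b, c). y ^ a * z ^ b * q ^ (c * (c - 1) div 2) / (qpoch q a * qpoch q b * qpoch q c)"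
  let ?g = "\<lambda>(a, b). (a, b, n - a - b)"
  have compositions: "{(a, b, c). a + b + c = n} = ?g ` (SIGMA a:{..n}. {..n - a})"
    by (auto simp: image_iff)
  have "inj_on ?g (SIGMA a:{..n}. {..n - a})"
    by (auto simp: inj_on_def)
  then have "(\<Sum>x\<in>{(a, b, c). a + b + c = n}. ?f x) = (\<Sum>x\<in>(SIGMA a:{..n}. {..n - a}). ?f (?g x))"
    unfolding compositions by (rule sum.reindex[unfolded comp_def])
  also have "\<dots> = (\<Sum>a\<le>n. \<Sum>b\<le>n - a. ?f (a, b, n - a - b))"
    by (subst sum.Sigma) (auto simp: case_prod_beta)
  also have "\<dots> = pp_scaled q n y z"
    unfolding pp_scaled_def hcoeff_def sum_distrib_left
    by (intro sum.cong refl) (simp add: divide_inverse mult_ac diff_diff_add)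
  finally show ?thesis
    unfolding pp_def by simp
qed

lemma pp_q_shift:
  assumes "\<forall>n::nat. n > 0 \<longrightarrow> q ^ n \<noteq> 1"
  shows "pp q k y (q * w) = pp q k y w + (q - 1) * w * pp q (k - 1) y w"
proof (cases "k < 0")
  case True
  then show ?thesis by (simp add: pp_def)
next
  case False
  then obtain n where k: "k = int n"
    by (metis nonneg_int_cases not_less)
  show ?thesis
  proof (cases n)
    case 0
    then show ?thesis using k by (simp add: pp_of_nat pp_def)
  next
    case (Suc m)
    have shifted: "pp q k y v = (1 - q) * (1 - q) ^ m * pp_scaled q (Suc m) y v" for v
      using k Suc pp_of_nat[of q "Suc m"] by simp
    have "pp q (k - 1) y w = (1 - q) ^ m * pp_scaled q m y w"
      using k Suc pp_of_nat[of q m] by simp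
    moreover have "pp_scaled q (Suc m) y (q * w) = pp_scaled q (Suc m) y w - w * pp_scaled q m y w"
      using pp_scaled_q_difference[OF assms, of m y w] by (simp add: algebra_simps)
    ultimately show ?thesis
      by (simp only: shifted) (simp add: algebra_simps)
  qed
qed

lemma det_mat_diag: "det (mat_diag n f) = (\<Prod>i<n. f i)"
  by (subst det_upper_triangular[of _ n])
     (auto simp: mat_diag_def upper_triangular_def prod_list_diag_prod atLeast0LessThan)

text \<open>Starting from the entries p_{n i}(y, q^(N-1-j) z), the matrix after m rounds of column
  differencing; the columns j \<ge> N - m are finished.\<close>
definition col_reduced_mat ::
    "complex \<Rightarrow> complex \<Rightarrow> complex \<Rightarrow> nat \<Rightarrow> (nat \<Rightarrow> int) \<Rightarrow> nat \<Rightarrow> complex mat" where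
  "col_reduced_mat q y z N n m = mat N N (\<lambda>(i, j).
     if N \<le> j + m then pp q (n i - int (N - 1 - j)) y z
     else pp q (n i - int m) y (q ^ (N - 1 - j - m) * z))"

definition col_diff_mat :: "nat \<Rightarrow> nat \<Rightarrow> complex mat" where
  "col_diff_mat N m = mat N N (\<lambda>(l, j).
     (if l = j then 1 else 0) - (if l = Suc j \<and> j + m + 1 < N then 1 else 0))"

definition col_diff_factor :: "complex \<Rightarrow> complex \<Rightarrow> nat \<Rightarrow> nat \<Rightarrow> nat \<Rightarrow> complex" where
  "col_diff_factor q z N m j = (if j + m + 1 < N then (q - 1) * z * q ^ (N - 2 - j - m) else 1)"

lemma col_reduced_mat_carrier: "col_reduced_mat q y z N n m \<in> carrier_mat N N"
  by (simp add: col_reduced_mat_def)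

lemma col_diff_mat_carrier: "col_diff_mat N m \<in> carrier_mat N N"
  by (simp add: col_diff_mat_def)

lemma det_col_diff_mat: "det (col_diff_mat N m) = 1"
  by (subst det_lower_triangular[of N])
     (auto simp: col_diff_mat_def prod_list_diag_prod)

lemma col_reduced_mat_step:
  assumes "\<forall>n::nat. n > 0 \<longrightarrow> q ^ n \<noteq> 1"
  shows "col_reduced_mat q y z N n m * col_diff_mat N m =
    col_reduced_mat q y z N n (Suc m) * mat_diag N (col_diff_factor q z N m)"
proof (rule eq_matI)
  fix i j
  assume "i < dim_row (col_reduced_mat q y z N n (Suc m) * mat_diag N (col_diff_factor q z N m))"
    and "j < dim_col (col_reduced_mat q y z N n (Suc m) * mat_diag N (col_diff_factor q z N m))"
  then have i: "i < N" and j: "j < N"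
    by (auto simp: col_reduced_mat_def mat_diag_def)
  let ?B = "\<lambda>m l. col_reduced_mat q y z N n m $$ (i, l)"
  have "(col_reduced_mat q y z N n m * col_diff_mat N m) $$ (i, j) =
      (\<Sum>l\<in>{0..<N}. ?B m l * ((if l = j then 1 else 0) - (if l = Suc j \<and> j + m + 1 < N then 1 else 0)))"
    using i j carrier_matD[OF col_reduced_mat_carrier]
    by (auto simp: scalar_prod_def col_diff_mat_def intro!: sum.cong)
  also have "\<dots> = (\<Sum>l\<in>{0..<N}. if l = j then ?B m l else 0)
      - (\<Sum>l\<in>{0..<N}. if l = Suc j \<and> j + m + 1 < N then ?B m l else 0)"
    unfolding sum_subtractf[symmetric] by (intro sum.cong refl) (simp add: right_diff_distrib)
  also have "\<dots> = ?B m j - (if j + m + 1 < N then ?B m (Suc j) else 0)"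
    using j by (simp add: sum.delta')
  finally have lhs: "(col_reduced_mat q y z N n m * col_diff_mat N m) $$ (i, j) = \<dots>" .
  have rhs: "(col_reduced_mat q y z N n (Suc m) * mat_diag N (col_diff_factor q z N m)) $$ (i, j) =
      ?B (Suc m) j * col_diff_factor q z N m j"
    using i j by (simp add: mat_diag_mult_right[OF col_reduced_mat_carrier])
  show "(col_reduced_mat q y z N n m * col_diff_mat N m) $$ (i, j) =
      (col_reduced_mat q y z N n (Suc m) * mat_diag N (col_diff_factor q z N m)) $$ (i, j)"
  proof (cases "j + m + 1 < N")
    case True
    define w where "w = q ^ (N - 2 - j - m) * z"
    have "q ^ (N - 1 - j - m) * z = q * w"
      unfolding w_def using True by (simp add: power_Suc[symmetric] Suc_diff_Suc del: power_Suc)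
    then have "?B m j = pp q (n i - int m) y (q * w)"
      using i j True by (simp add: col_reduced_mat_def)
    moreover have "?B m (Suc j) = pp q (n i - int m) y w"
      and "?B (Suc m) j = pp q (n i - int m - 1) y w"
      using i j True by (simp_all add: col_reduced_mat_def w_def algebra_simps)
    ultimately show ?thesis
      using True pp_q_shift[OF assms, of "n i - int m" y w]
      by (simp add: lhs rhs col_diff_factor_def w_def algebra_simps)
  next
    case False
    then have "?B m j = ?B (Suc m) j"
      using i j by (cases "N = Suc (j + m)") (simp_all add: col_reduced_mat_def)
    then show ?thesis
      using False by (simp add: lhs rhs col_diff_factor_def)
  qed
qed (auto simp: col_reduced_mat_def col_diff_mat_def mat_diag_def)

lemma det_col_reduced_mat:
  assumes "\<forall>n::nat. n > 0 \<longrightarrow> q ^ n \<noteq> 1"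
  shows "det (col_reduced_mat q y z N n 0) =
    det (col_reduced_mat q y z N n k) * (\<Prod>m<k. \<Prod>j<N. col_diff_factor q z N m j)"
proof (induction k)
  case (Suc k)
  have "det (col_reduced_mat q y z N n k) =
      det (col_reduced_mat q y z N n k * col_diff_mat N k)"
    by (simp add: det_mult[OF col_reduced_mat_carrier col_diff_mat_carrier] det_col_diff_mat)
  also have "\<dots> = det (col_reduced_mat q y z N n (Suc k)) * (\<Prod>j<N. col_diff_factor q z N k j)"
    by (simp add: col_reduced_mat_step[OF assms] det_mult[OF col_reduced_mat_carrier]
        det_mat_diag)
  finally show ?case
    using Suc by (simp add: mult_ac)
qed simp

lemma prod_col_diff_factor:
  "(\<Prod>j<N. col_diff_factor q z N m j) = ((q - 1) * z) ^ (N - Suc m) * q ^ (\<Sum>j<N - Suc m. j)"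
proof -
  let ?r = "N - Suc m"
  have "(\<Prod>j<N. col_diff_factor q z N m j) = (\<Prod>j<?r. col_diff_factor q z N m j)"
    by (rule prod.mono_neutral_right) (auto simp: col_diff_factor_def)
  also have "\<dots> = (\<Prod>j<?r. (q - 1) * z * q ^ (?r - Suc j))"
    by (rule prod.cong) (auto simp: col_diff_factor_def add_ac)
  also have "\<dots> = ((q - 1) * z) ^ ?r * (\<Prod>j<?r. q ^ (?r - Suc j))"
    by (simp add: prod.distrib)
  also have "(\<Prod>j<?r. q ^ (?r - Suc j)) = (\<Prod>j<?r. q ^ j)"
    by (rule prod.nat_diff_reindex)
  finally show ?thesis
    by (simp add: power_sum)
qed

lemma prod_prod_col_diff_factor:
  "(\<Prod>m<N. \<Prod>j<N. col_diff_factor q z N m j) =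
    ((q - 1) * z) ^ (\<Sum>r<N. r) * q ^ (\<Sum>r<N. \<Sum>j<r. j)"
proof -
  have "(\<Prod>m<N. \<Prod>j<N. col_diff_factor q z N m j) = (\<Prod>r<N. ((q - 1) * z) ^ r * q ^ (\<Sum>j<r. j))"
    unfolding prod_col_diff_factor
    by (rule prod.nat_diff_reindex[where g = "\<lambda>r. ((q - 1) * z) ^ r * q ^ (\<Sum>j<r. j)"])
  then show ?thesis
    by (simp add: prod.distrib power_sum)
qed

lemma sum_lessThan_id_int: "2 * int (\<Sum>j<n. j) = int n * (int n - 1)"
  by (induction n) (auto simp: algebra_simps)

lemma sum_sum_lessThan_id_int: "6 * int (\<Sum>r<n. \<Sum>j<r. j) = (int n - 2) * (int n - 1) * int n"
proof (induction n)
  case (Suc n)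
  then show ?case
    using sum_lessThan_id_int[of n] by (simp add: algebra_simps)
qed simp

theorem lemma4:
  fixes q :: complex and N :: nat and y z :: complex
  assumes "q \<noteq> 0" and "\<forall>n::nat. n > 0 \<longrightarrow> q ^ n \<noteq> 1"
    and "N \<ge> 1" and "z \<noteq> 0"
  shows "phi q N y z =
    ((q - 1) * z) powi (- (int N * (int N - 1) div 2)) *
    q powi (- ((int N - 2) * (int N - 1) * int N div 6)) *
    det (mat N N (\<lambda>(i, j). pp q (2 * (int N - int i - 1) + 1) y (q ^ (N - j - 1) * z)))"
proof -
  define n where "n = (\<lambda>i::nat. 2 * (int N - int i - 1) + 1)"
  have "q \<noteq> 1"
    using assms(2)[rule_format, of 1] by simp
  then have nonzero: "(q - 1) * z \<noteq> 0"
    using assms(4) by simp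
  have initial: "mat N N (\<lambda>(i, j). pp q (2 * (int N - int i - 1) + 1) y (q ^ (N - j - 1) * z)) =
      col_reduced_mat q y z N n 0"
    unfolding col_reduced_mat_def n_def by (rule cong_mat) simp_all
  have final: "col_reduced_mat q y z N n N = mat N N (\<lambda>(i, j). pp q (int N - 2 * int i + int j) y z)"
    unfolding col_reduced_mat_def by (rule cong_mat) (simp_all add: n_def of_nat_diff algebra_simps)
  have det_initial: "det (col_reduced_mat q y z N n 0) =
      phi q N y z * (((q - 1) * z) ^ (\<Sum>r<N. r) * q ^ (\<Sum>r<N. \<Sum>j<r. j))"
    unfolding det_col_reduced_mat[OF assms(2), of y z N n N] prod_prod_col_diff_factor final phi_def ..
  have exponent_z: "int N * (int N - 1) div 2 = int (\<Sum>r<N. r)"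
    using sum_lessThan_id_int[of N] by simp
  have exponent_q: "(int N - 2) * (int N - 1) * int N div 6 = int (\<Sum>r<N. \<Sum>j<r. j)"
    using sum_sum_lessThan_id_int[of N] by simp
  show ?thesis
    unfolding initial det_initial exponent_z exponent_q power_int_minus power_int_of_nat
    using nonzero assms(1) by (simp add: field_simps)
qed

end
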